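(* Consider Algorithm AUX with parameter $t_0$ on an instance satisfying the standing assumption, with an edge labeling as in the context. Let $u,v$ be the two offline neighbors of a second-class online type. Then for every $t\in[0,1]$, we have $2\bar f_u(t)-g'_{u,v}(t)\ge \bar g(t)$.
   Context: **Model.** Poisson arrival model. Each online type $i$ independently arrives according to a Poisson process of rate $\lambda_i$ on $[0,1]$. On arrival, a vertex is immediately and irrevocably matched to an unmatched offline neighbor or discarded. Each offline vertex is matched at most once. The instance is a bipartite graph $(I,J,E)$ with rates $\lambda_i>0$. **Standing assumption.** There are values $x_{ij}\ge0$ (an optimal Jaillet–Lu LP solution) with $\sum_i x_{ij}=1$ for all $j$, and each type is one of two kinds: - first-class: one neighbor $j$, with $x_{ij}=\lambda_i$; - second-class: two neighbors $j_1,j_2$, with $x_{ij_1}=x_{ij_2}=\lambda_i/2$. **Labeling.** Each edge is labeled first-class or second-class. Edges of first-class types are labeled first-class. For every $j$, the first-class-labeled edges at $j$ have total $x$-value $1-\ln2$. **Reference process.** $H$ has offline vertices $a,b$; a type of rate $2\ln2$ adjacent to both; and types of rate $1-\ln2$ adjacent only to $a$, resp. only to $b$. Algorithm RES with parameter $t_0$ works as follows: - single-neighbor arrivals are matched if their neighbor is unmatched; - a two-neighbor arrival at time $t>t_0$ with an unmatched neighbor is matched to a uniformly random unmatched neighbor. On $H$ under RES, $f(t)$ is the probability that a given offline vertex is matched by time $t$, $g(t)$ the probability both are, and $\bar g=1-g$. **Algorithm AUX (parameter $t_0$).** Under AUX: - $f_u(t)$ is the probability that offline $u$ is matched by time $t$,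 and $\bar f_u=1-f_u$; - $g'_{u,v}(t)$ is the probability that both $u$ and $v$ are unmatched at time $t$. Edges are used only if their offline endpoint is unmatched. - A first-class arrival is matched to its neighbor if possible. - A second-class arrival of type $i$ with neighbors $u,v$ chooses at most one edge, with disjoint probabilities: - each first-class-labeled edge $(i,u)$ with probability $1/2$; - if the arrival time is $t>t_0$, each second-class-labeled edge $(i,u)$ with probability $\frac12\min\{\bar g(t)/(2\bar f_u(t)-g'_{u,v}(t)),1\}$ if $v$ is unmatched, or $\min\{\bar g(t)/(2\bar f_u(t)-g'_{u,v}(t)),1\}$ if $v$ is matched. *)

theory Defs
  imports "HOL-Analysis.Analysis"
begin

text \<open>Instance: online types I with rates lam and neighbourhoods nbr (subsets of the
offline vertex set J); values x.\<close>

definition standing ::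
  "'i set \<Rightarrow> 'j set \<Rightarrow> ('i \<Rightarrow> real) \<Rightarrow> ('i \<Rightarrow> 'j set) \<Rightarrow> ('i \<Rightarrow> 'j \<Rightarrow> real) \<Rightarrow> bool" where
  "standing I J lam nbr x \<longleftrightarrow>
     finite I \<and> finite J \<and>
     (\<forall>i\<in>I. lam i > 0 \<and> nbr i \<subseteq> J \<and>
        ((\<exists>j. nbr i = {j} \<and> x i j = lam i) \<or>
         (\<exists>j1 j2. j1 \<noteq> j2 \<and> nbr i = {j1, j2} \<and> x i j1 = lam i / 2 \<and> x i j2 = lam i / 2))) \<and>
     (\<forall>j\<in>J. (\<Sum>i\<in>{i\<in>I. j \<in> nbr i}. x i j) = 1)"

text \<open>Edge labeling: lab i j = True means the edge (i,j) is labeled first-class.\<close>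

definition valid_labeling ::
  "'i set \<Rightarrow> 'j set \<Rightarrow> ('i \<Rightarrow> 'j set) \<Rightarrow> ('i \<Rightarrow> 'j \<Rightarrow> real) \<Rightarrow> ('i \<Rightarrow> 'j \<Rightarrow> bool) \<Rightarrow> bool" where
  "valid_labeling I J nbr x lab \<longleftrightarrow>
     (\<forall>i\<in>I. card (nbr i) = 1 \<longrightarrow> (\<forall>j\<in>nbr i. lab i j)) \<and>
     (\<forall>j\<in>J. (\<Sum>i\<in>{i\<in>I. j \<in> nbr i \<and> lab i j}. x i j) = 1 - ln 2)"

text \<open>Law of a matching process whose state is the set S of matched offline vertices.
p t S is the probability that the matched set at time t is exactly S (S \<subseteq> J);
rate t S w is the rate at which unmatched w gets matched at time t in state S.
The Kolmogorov forward equations are stated in integral form on [0,1]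
(the rates may jump at t0).\<close>

definition kolmo ::
  "'j set \<Rightarrow> (real \<Rightarrow> 'j set \<Rightarrow> 'j \<Rightarrow> real) \<Rightarrow> (real \<Rightarrow> 'j set \<Rightarrow> real) \<Rightarrow> bool" where
  "kolmo J rate p \<longleftrightarrow>
     (\<forall>S. S \<subseteq> J \<longrightarrow> p 0 S = (if S = {} then 1 else 0)) \<and>
     (\<forall>t\<in>{0..1}. \<forall>S. S \<subseteq> J \<longrightarrow>
        ((\<lambda>s. (\<Sum>w\<in>S. p s (S - {w}) * rate s (S - {w}) w)
              - p s S * (\<Sum>w\<in>J - S. rate s S w)) has_integral (p t S - p 0 S)) {0..t})"

text \<open>Reference process H under RES: offline vertices a = True, b = False.
Each offline vertex has its own single-neighbour type of rate 1 - ln 2; the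
two-neighbour type has rate 2 ln 2 and, after t0, picks a uniformly random
unmatched neighbour.\<close>

definition rateRES :: "real \<Rightarrow> real \<Rightarrow> bool set \<Rightarrow> bool \<Rightarrow> real" where
  "rateRES t0 t S w =
     (1 - ln 2) + (if t0 < t then 2 * ln 2 * (if (\<not> w) \<in> S then 1 else 1 / 2) else 0)"

definition fbar :: "'j set \<Rightarrow> (real \<Rightarrow> 'j set \<Rightarrow> real) \<Rightarrow> 'j \<Rightarrow> real \<Rightarrow> real" where
  "fbar J p u t = (\<Sum>S\<in>{S. S \<subseteq> J \<and> u \<notin> S}. p t S)"

definition gprime :: "'j set \<Rightarrow> (real \<Rightarrow> 'j set \<Rightarrow> real) \<Rightarrow> 'j \<Rightarrow> 'j \<Rightarrow> real \<Rightarrow> real" where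
  "gprime J p u v t = (\<Sum>S\<in>{S. S \<subseteq> J \<and> u \<notin> S \<and> v \<notin> S}. p t S)"

text \<open>Probability that an arrival of type i at time t in state S chooses edge (i,w)
(w unmatched).  gbar is the function 1 - g of the reference process.\<close>

definition aux_prob ::
  "'j set \<Rightarrow> ('i \<Rightarrow> 'j set) \<Rightarrow> ('i \<Rightarrow> 'j \<Rightarrow> bool) \<Rightarrow> real \<Rightarrow> (real \<Rightarrow> real)
    \<Rightarrow> (real \<Rightarrow> 'j set \<Rightarrow> real) \<Rightarrow> real \<Rightarrow> 'j set \<Rightarrow> 'i \<Rightarrow> 'j \<Rightarrow> real" where
  "aux_prob J nbr lab t0 gbar p t S i w =
     (if card (nbr i) = 1 then 1
      else if lab i w then 1 / 2
      else if t0 < t then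
        (let v = the_elem (nbr i - {w});
             r = min (gbar t / (2 * fbar J p w t - gprime J p w v t)) 1
         in if v \<notin> S then r / 2 else r)
      else 0)"

definition aux_rate ::
  "'i set \<Rightarrow> 'j set \<Rightarrow> ('i \<Rightarrow> real) \<Rightarrow> ('i \<Rightarrow> 'j set) \<Rightarrow> ('i \<Rightarrow> 'j \<Rightarrow> bool) \<Rightarrow> real
    \<Rightarrow> (real \<Rightarrow> real) \<Rightarrow> (real \<Rightarrow> 'j set \<Rightarrow> real) \<Rightarrow> real \<Rightarrow> 'j set \<Rightarrow> 'j \<Rightarrow> real" where
  "aux_rate I J lam nbr lab t0 gbar p t S w =
     (\<Sum>i\<in>{i\<in>I. w \<in> nbr i}. lam i * aux_prob J nbr lab t0 gbar p t S i w)"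

end

theory Submission
  imports Defs
begin

text \<open>
  Write f = fbar_ref and g = gbar for the reference process H, and f_w, g'_wv and
  D_wv = 2 f_w - g'_wv for AUX.  H is explicit: by symmetry its forward equations give
  f' = -(1 - ln 2) f - [t > t0] (ln 2) g and g' = -2 rho (g - f), where rho is the rate at which
  a vertex of H whose partner is matched gets matched.  In AUX, a second-class edge (i, w) adds
  at most x_iw g to the matching flux into w, and these edges carry total x-value ln 2, so a
  barrier argument gives f_w >= f.  This keeps every D_wv positive, hence the rates of AUX and
  its law nonnegative.  All rates of AUX are then at most rho, which yields
  f_u + f_v - g'_uv >= g.  Fed back into the flux, this bounds the derivative of f_w - f by ln 2
  times its maximum over w; as ln 2 < 1, Gronwall gives f_w = f for all w, and finally
  2 f_u - g'_uv = f_u + f_v - g'_uv >= g.\<close>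

lemma integral_form_subinterval:
  fixes G y :: "real \<Rightarrow> real"
  assumes y: "\<forall>s\<in>{a..b}. (G has_integral (y s - y a)) {a..s}"
    and "a \<le> c" "c \<le> d" "d \<le> b"
  shows "(G has_integral (y d - y c)) {c..d}"
proof -
  have ad: "(G has_integral (y d - y a)) {a..d}" and ac: "(G has_integral (y c - y a)) {a..c}"
    using y assms by auto
  have ad_int: "G integrable_on {a..d}" using ad by blast
  have cd: "G integrable_on {c..d}"
    by (rule integrable_subinterval_real[OF ad_int]) (use assms in auto)
  have "integral {a..c} G + integral {c..d} G = integral {a..d} G"
    using Henstock_Kurzweil_Integration.integral_combine[OF _ _ ad_int] assms by auto
  then have "integral {c..d} G = y d - y c"
    using ac ad by (simp add: integral_unique)
  with integrable_integral[OF cd] show ?thesis by simp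
qed

lemma integral_form_continuous_on:
  fixes G y :: "real \<Rightarrow> real"
  assumes y: "\<forall>s\<in>{a..b}. (G has_integral (y s - y a)) {a..s}" and "a \<le> b"
  shows "continuous_on {a..b} y"
proof -
  have "G integrable_on {a..b}" using assms by auto
  then have "continuous_on {a..b} (\<lambda>s. y a + integral {a..s} G)"
    by (intro continuous_on_add continuous_on_const indefinite_integral_continuous_1)
  moreover have "y a + integral {a..s} G = y s" if "s \<in> {a..b}" for s
  proof -
    have "(G has_integral (y s - y a)) {a..s}" using y that by blast
    then show ?thesis by (simp add: integral_unique)
  qed
  ultimately show ?thesis by (rule continuous_on_eq)
qed

text \<open>On the last stretch \<open>(\<tau>, s\<^sub>1]\<close> before a negative value \<open>y s\<^sub>1\<close>, \<open>y\<close> is negative,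
  so \<open>G\<close> is nonnegative there and \<open>y\<close> cannot have decreased.\<close>

lemma integral_form_nonneg:
  fixes G y :: "real \<Rightarrow> real"
  assumes "a \<le> b" and y: "\<forall>s\<in>{a..b}. (G has_integral (y s - y a)) {a..s}"
    and "0 \<le> y a" and G: "\<And>s. s \<in> {a<..b} \<Longrightarrow> y s < 0 \<Longrightarrow> 0 \<le> G s"
  shows "\<forall>s\<in>{a..b}. 0 \<le> y s"
proof (rule ccontr)
  assume "\<not> ?thesis"
  then obtain s1 where s1: "s1 \<in> {a..b}" "y s1 < 0" by auto
  define Z where "Z = {a..s1} \<inter> y -` {0..}"
  have "continuous_on {a..s1} y"
    using integral_form_continuous_on[OF y \<open>a \<le> b\<close>] s1 by (auto intro: continuous_on_subset)
  then have "closed Z" unfolding Z_def by (rule continuous_closed_preimage) auto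
  moreover have bdd: "bdd_above Z" unfolding Z_def by (auto intro: bdd_aboveI[of _ s1])
  moreover have "a \<in> Z" using \<open>0 \<le> y a\<close> s1 unfolding Z_def by auto
  ultimately have "Sup Z \<in> Z" using closed_contains_Sup by blast
  define \<tau> where "\<tau> = Sup Z"
  have \<tau>: "a \<le> \<tau>" "\<tau> < s1" "0 \<le> y \<tau>"
    using \<open>Sup Z \<in> Z\<close> s1 unfolding \<tau>_def Z_def by (auto simp: order.order_iff_strict)
  have neg: "y s < 0" if "s \<in> {\<tau><..s1}" for s
  proof (rule ccontr)
    assume "\<not> y s < 0"
    then have "s \<in> Z" using that \<tau> unfolding Z_def by auto
    then show False using cSup_upper[OF _ bdd] that unfolding \<tau>_def by force
  qed
  have "(G has_integral (y s1 - y \<tau>)) {\<tau>..s1}"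
    using integral_form_subinterval[OF y] \<tau> s1 by auto
  then have "((\<lambda>s. if s = \<tau> then 0 else G s) has_integral (y s1 - y \<tau>)) {\<tau>..s1}"
    by (rule has_integral_spike_finite[where S="{\<tau>}", rotated 2]) auto
  then have "0 \<le> y s1 - y \<tau>"
    by (rule has_integral_nonneg) (use neg G \<tau> s1 in auto)
  with \<tau> s1 show False by simp
qed

text \<open>The maximum \<open>M\<close> of the family over \<open>[a, b]\<close> satisfies \<open>M \<le> K (b - a) M\<close>.\<close>

lemma integral_form_family_eq_0:
  fixes e G :: "'j \<Rightarrow> real \<Rightarrow> real"
  assumes "finite J" "a \<le> b" "0 \<le> K" "K * (b - a) < 1"
    and e: "\<And>w s. w \<in> J \<Longrightarrow> s \<in> {a..b} \<Longrightarrow> (G w has_integral (e w s - e w a)) {a..s}"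
    and e_a: "\<And>w. w \<in> J \<Longrightarrow> e w a = 0"
    and e_nonneg: "\<And>w s. w \<in> J \<Longrightarrow> s \<in> {a..b} \<Longrightarrow> 0 \<le> e w s"
    and G: "\<And>w s M. w \<in> J \<Longrightarrow> s \<in> {a..b} \<Longrightarrow> (\<forall>v\<in>J. e v s \<le> M) \<Longrightarrow> G w s \<le> K * M"
    and w: "w \<in> J" and s: "s \<in> {a..b}"
  shows "e w s = 0"
proof -
  have "\<exists>r\<in>{a..b}. \<forall>s\<in>{a..b}. e v s \<le> e v r" if "v \<in> J" for v
    using continuous_attains_sup[of "{a..b}" "e v"] integral_form_continuous_on[of a b "G v" "e v"]
      e that \<open>a \<le> b\<close> by auto
  then obtain r where r: "\<And>v. v \<in> J \<Longrightarrow> r v \<in> {a..b} \<and> (\<forall>s\<in>{a..b}. e v s \<le> e v (r v))"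
    by metis
  define M where "M = Max ((\<lambda>v. e v (r v)) ` J)"
  have "M \<in> (\<lambda>v. e v (r v)) ` J" unfolding M_def using \<open>finite J\<close> \<open>w \<in> J\<close> by (intro Max_in) auto
  then obtain w0 where w0: "w0 \<in> J" "e w0 (r w0) = M" by auto
  have le_M: "e v s \<le> M" if "v \<in> J" "s \<in> {a..b}" for v s
    using r[OF that(1)] that \<open>finite J\<close> unfolding M_def by (fastforce intro: order_trans[OF _ Max_ge])
  define s0 where "s0 = r w0"
  have s0: "s0 \<in> {a..b}" using r w0 unfolding s0_def by auto
  have "0 \<le> M" using e_nonneg[OF w0(1) s0] w0 unfolding s0_def by simp
  have "e w0 s0 - e w0 a \<le> (s0 - a) * (K * M)"
    using has_integral_le[OF e[OF w0(1) s0] has_integral_const_real[of "K * M" a s0]] G[OF w0(1)] le_M s0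
    by auto
  also have "\<dots> \<le> (b - a) * (K * M)"
    using s0 \<open>0 \<le> K\<close> \<open>0 \<le> M\<close> by (intro mult_right_mono) auto
  finally have "M * (1 - K * (b - a)) \<le> 0"
    using e_a[OF w0(1)] w0 unfolding s0_def by (simp add: algebra_simps)
  then have "M \<le> 0" using \<open>K * (b - a) < 1\<close> by (simp add: mult_le_0_iff)
  then show ?thesis using le_M[OF w s] e_nonneg[OF w s] by simp
qed

lemma min_divide_1_mult_le:
  fixes g d :: real
  assumes "0 \<le> g"
  shows "min (g / d) 1 * d \<le> g"
proof (cases "0 < d")
  case True
  then have "min (g / d) 1 * d \<le> g / d * d" by (intro mult_right_mono) auto
  with True show ?thesis by simp
next
  case False
  then have "g / d \<le> 0" using assms by (simp add: divide_nonneg_nonpos)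
  then have "min (g / d) 1 = g / d" by simp
  then show ?thesis using assms by simp
qed

lemma min_divide_1_mult_eq:
  fixes g d :: real
  assumes "0 \<le> g" "0 \<le> d"
  shows "min (g / d) 1 * d = min g d"
  using assms by (cases "d = 0") (auto simp: min_def divide_le_eq_1 field_simps)

definition kolmo_drift ::
  "'j set \<Rightarrow> (real \<Rightarrow> 'j set \<Rightarrow> 'j \<Rightarrow> real) \<Rightarrow> (real \<Rightarrow> 'j set \<Rightarrow> real)
    \<Rightarrow> real \<Rightarrow> 'j set \<Rightarrow> real"
  where "kolmo_drift J rate p s S =
    (\<Sum>w\<in>S. p s (S - {w}) * rate s (S - {w}) w) - p s S * (\<Sum>w\<in>J - S. rate s S w)"

lemma kolmo_initial: "kolmo J rate p \<Longrightarrow> S \<subseteq> J \<Longrightarrow> p 0 S = (if S = {} then 1 else 0)"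
  unfolding kolmo_def by blast

lemma kolmo_has_integral:
  "kolmo J rate p \<Longrightarrow> S \<subseteq> J \<Longrightarrow> t \<in> {0..1} \<Longrightarrow>
    ((\<lambda>s. kolmo_drift J rate p s S) has_integral (p t S - p 0 S)) {0..t}"
  unfolding kolmo_def kolmo_drift_def by blast

lemma kolmo_continuous_on:
  assumes "kolmo J rate p" "S \<subseteq> J"
  shows "continuous_on {0..1} (\<lambda>s. p s S)"
  by (rule integral_form_continuous_on[where G="\<lambda>s. kolmo_drift J rate p s S"])
    (use kolmo_has_integral[OF assms] in auto)

lemma kolmo_sum_at_0:
  assumes "kolmo J rate p" "finite J" "{} \<in> F" "F \<subseteq> Pow J"
  shows "(\<Sum>S\<in>F. p 0 S) = 1"
proof -
  have "finite F" using assms(2,4) by (simp add: finite_subset)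
  have "p 0 S = (if S = {} then 1 else 0)" if "S \<in> F" for S
    using kolmo_initial[OF assms(1)] assms(4) that by blast
  then have "(\<Sum>S\<in>F. p 0 S) = (\<Sum>S\<in>F. if S = {} then 1 else 0)"
    by (rule sum.cong[OF refl])
  also have "\<dots> = 1" using \<open>finite F\<close> \<open>{} \<in> F\<close> by simp
  finally show ?thesis .
qed

text \<open>The flow between two states in which no vertex of \<open>A\<close> is matched cancels; only the flow
  out of this family, through matching a vertex of \<open>A\<close>, remains.\<close>

lemma sum_kolmo_drift_avoiding:
  assumes "finite J" "A \<subseteq> J"
  shows "(\<Sum>S | S \<subseteq> J \<and> S \<inter> A = {}. kolmo_drift J rate p s S)
       = - (\<Sum>S | S \<subseteq> J \<and> S \<inter> A = {}. p s S * (\<Sum>w\<in>A. rate s S w))"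
proof -
  define F where "F = {S. S \<subseteq> J \<and> S \<inter> A = {}}"
  define f where "f T w = p s T * rate s T w" for T w
  have "finite F" unfolding F_def using \<open>finite J\<close> by (auto intro: finite_subset[of _ "Pow J"])
  have "(\<Sum>S\<in>F. \<Sum>w\<in>S. f (S - {w}) w) = (\<Sum>(S, w)\<in>Sigma F (\<lambda>S. S). f (S - {w}) w)"
    using \<open>finite F\<close> \<open>finite J\<close> by (subst sum.Sigma) (auto simp: F_def intro: finite_subset)
  also have "\<dots> = (\<Sum>(T, w)\<in>Sigma F (\<lambda>T. J - T - A). f T w)"
    by (rule sum.reindex_bij_witness[where i="\<lambda>(T, w). (insert w T, w)" and j="\<lambda>(S, w). (S - {w}, w)"])
      (auto simp: F_def insert_absorb)
  also have "\<dots> = (\<Sum>T\<in>F. \<Sum>w\<in>J - T - A. f T w)"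
    using \<open>finite F\<close> \<open>finite J\<close> by (subst sum.Sigma) auto
  finally have inflow: "(\<Sum>S\<in>F. \<Sum>w\<in>S. f (S - {w}) w) = (\<Sum>T\<in>F. \<Sum>w\<in>J - T - A. f T w)" .
  have "(\<Sum>w\<in>J - T. f T w) = (\<Sum>w\<in>J - T - A. f T w) + (\<Sum>w\<in>A. f T w)" if "T \<in> F" for T
    using that assms by (subst sum.subset_diff[of A "J - T"]) (auto simp: F_def)
  then have outflow: "(\<Sum>T\<in>F. \<Sum>w\<in>J - T. f T w) = (\<Sum>T\<in>F. \<Sum>w\<in>J - T - A. f T w) + (\<Sum>T\<in>F. \<Sum>w\<in>A. f T w)"
    by (simp add: sum.distrib)
  have "(\<Sum>S\<in>F. kolmo_drift J rate p s S) = (\<Sum>S\<in>F. \<Sum>w\<in>S. f (S - {w}) w) - (\<Sum>T\<in>F. \<Sum>w\<in>J - T. f T w)"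
    unfolding kolmo_drift_def f_def sum_subtractf by (simp add: sum_distrib_left)
  also have "\<dots> = - (\<Sum>T\<in>F. \<Sum>w\<in>A. f T w)"
    unfolding inflow outflow by simp
  finally show ?thesis unfolding F_def f_def by (simp add: sum_distrib_left)
qed

lemma kolmo_avoiding_has_integral:
  assumes kolmo: "kolmo J rate p" and "finite J" "A \<subseteq> J" "t \<in> {0..1}"
  shows "((\<lambda>s. - (\<Sum>S | S \<subseteq> J \<and> S \<inter> A = {}. p s S * (\<Sum>w\<in>A. rate s S w)))
           has_integral ((\<Sum>S | S \<subseteq> J \<and> S \<inter> A = {}. p t S) - 1)) {0..t}"
proof -
  let ?F = "{S. S \<subseteq> J \<and> S \<inter> A = {}}"
  have "finite ?F" using \<open>finite J\<close> by (auto intro: finite_subset[of _ "Pow J"])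
  have "((\<lambda>s. \<Sum>S\<in>?F. kolmo_drift J rate p s S) has_integral (\<Sum>S\<in>?F. p t S - p 0 S)) {0..t}"
    using kolmo_has_integral[OF kolmo _ \<open>t \<in> {0..1}\<close>] by (intro has_integral_sum[OF \<open>finite ?F\<close>]) auto
  moreover have "(\<Sum>S\<in>?F. p 0 S) = 1" by (rule kolmo_sum_at_0[OF kolmo \<open>finite J\<close>]) auto
  ultimately show ?thesis
    by (simp add: sum_kolmo_drift_avoiding[OF \<open>finite J\<close> \<open>A \<subseteq> J\<close>] sum_subtractf)
qed

lemma kolmo_total_mass:
  assumes "kolmo J rate p" "finite J" "t \<in> {0..1}"
  shows "(\<Sum>S | S \<subseteq> J. p t S) = 1"
  using kolmo_avoiding_has_integral[OF assms(1,2) empty_subsetI assms(3)] by simp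

lemma kolmo_fbar_has_integral:
  assumes "kolmo J rate p" "finite J" "w \<in> J" "t \<in> {0..1}"
  shows "((\<lambda>s. - (\<Sum>S | S \<subseteq> J \<and> w \<notin> S. p s S * rate s S w)) has_integral (fbar J p w t - 1)) {0..t}"
proof -
  have "{S. S \<subseteq> J \<and> S \<inter> {w} = {}} = {S. S \<subseteq> J \<and> w \<notin> S}" by auto
  then show ?thesis
    using kolmo_avoiding_has_integral[OF assms(1,2) _ assms(4), of "{w}"] assms(3) by (simp add: fbar_def)
qed

lemma kolmo_gprime_has_integral:
  assumes "kolmo J rate p" "finite J" "u \<in> J" "v \<in> J" "u \<noteq> v" "t \<in> {0..1}"
  shows "((\<lambda>s. - (\<Sum>S | S \<subseteq> J \<and> u \<notin> S \<and> v \<notin> S. p s S * (rate s S u + rate s S v)))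
           has_integral (gprime J p u v t - 1)) {0..t}"
proof -
  have "{S. S \<subseteq> J \<and> S \<inter> {u, v} = {}} = {S. S \<subseteq> J \<and> u \<notin> S \<and> v \<notin> S}" by auto
  then show ?thesis
    using kolmo_avoiding_has_integral[OF assms(1,2) _ assms(6), of "{u, v}"] assms(3-5)
    by (simp add: gprime_def)
qed

lemma kolmo_drift_nonneg:
  assumes "S \<subseteq> J" "\<forall>w\<in>S. 0 \<le> p s (S - {w})" "p s S \<le> 0" "\<forall>T. \<forall>w\<in>J. 0 \<le> rate s T w"
  shows "0 \<le> kolmo_drift J rate p s S"
proof -
  have "0 \<le> (\<Sum>w\<in>S. p s (S - {w}) * rate s (S - {w}) w)"
    using assms by (intro sum_nonneg mult_nonneg_nonneg) auto
  moreover have "p s S * (\<Sum>w\<in>J - S. rate s S w) \<le> 0"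
    using assms by (intro mult_nonpos_nonneg sum_nonneg) auto
  ultimately show ?thesis unfolding kolmo_drift_def by simp
qed

text \<open>By induction on \<open>S\<close>: the drift of \<open>p s S\<close> involves only \<open>p s S\<close> itself, with a
  nonpositive coefficient, and the states \<open>S - {w}\<close>.\<close>

lemma kolmo_nonneg_on_interval:
  assumes kolmo: "kolmo J rate p" and "finite J" and T: "0 \<le> T" "T \<le> b" "b \<le> 1"
    and p_T: "\<And>S. S \<subseteq> J \<Longrightarrow> 0 \<le> p T S"
    and rate: "\<And>s. s \<in> {T<..b} \<Longrightarrow> \<forall>S. \<forall>w\<in>J. 0 \<le> rate s S w"
    and "S \<subseteq> J" "s \<in> {T..b}"
  shows "0 \<le> p s S"
proof -
  have "finite S" using \<open>S \<subseteq> J\<close> \<open>finite J\<close> by (rule finite_subset)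
  then show ?thesis using \<open>S \<subseteq> J\<close> \<open>s \<in> {T..b}\<close>
  proof (induction S arbitrary: s rule: finite_psubset_induct)
    case (psubset S)
    have "\<forall>s\<in>{0..1}. ((\<lambda>s. kolmo_drift J rate p s S) has_integral (p s S - p 0 S)) {0..s}"
      using kolmo_has_integral[OF kolmo psubset.prems(1)] by blast
    then have "((\<lambda>s. kolmo_drift J rate p s S) has_integral (p r S - p T S)) {T..r}"
      if "r \<in> {T..b}" for r
      by (rule integral_form_subinterval) (use T that in auto)
    then have "\<forall>s\<in>{T..b}. 0 \<le> p s S"
    proof (intro integral_form_nonneg[OF \<open>T \<le> b\<close>] ballI)
      show "0 \<le> p T S" using p_T psubset.prems(1) .
    next
      fix r assume r: "r \<in> {T<..b}" and "p r S < 0"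
      have "0 \<le> p r (S - {w})" if "w \<in> S" for w
        by (rule psubset.IH) (use that r psubset.prems(1) in auto)
      then show "0 \<le> kolmo_drift J rate p r S"
        using \<open>p r S < 0\<close> by (intro kolmo_drift_nonneg[where S=S] psubset.prems(1) rate[OF r]) auto
    qed
    then show ?case using psubset.prems(2) by blast
  qed
qed

lemma continuous_on_nonneg_endpoint:
  fixes f :: "real \<Rightarrow> real"
  assumes "continuous_on {a..b} f" "a < b" "\<And>r. r \<in> {a..<b} \<Longrightarrow> 0 \<le> f r"
  shows "0 \<le> f b"
proof -
  have "eventually (\<lambda>r. 0 \<le> f r) (at_left b)"
    unfolding eventually_at_left_field using assms(2,3) by (intro exI[of _ a]) auto
  with continuous_on_Icc_at_leftD[OF assms(1,2)] show ?thesis by (rule tendsto_lowerbound) simp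
qed

lemma kolmo_nonneg_continue:
  assumes kolmo: "kolmo J rate p" and "finite J" and T: "T \<in> {0..<1}"
    and p_T: "\<And>S. S \<subseteq> J \<Longrightarrow> 0 \<le> p T S"
    and rate: "eventually (\<lambda>s. \<forall>S. \<forall>w\<in>J. 0 \<le> rate s S w) (at_right T)"
  obtains c where "T < c" "\<And>s S. s \<in> {T..c} \<Longrightarrow> S \<subseteq> J \<Longrightarrow> 0 \<le> p s S"
proof -
  from rate obtain b where "T < b" and b: "\<And>r. T < r \<Longrightarrow> r < b \<Longrightarrow> \<forall>S. \<forall>w\<in>J. 0 \<le> rate r S w"
    unfolding eventually_at_right_field by blast
  define c where "c = min 1 ((T + b) / 2)"
  have c: "T < c" "c \<le> 1" "c < b" using \<open>T < b\<close> T unfolding c_def by (auto simp: min_less_iff_disj)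
  have rate_c: "\<forall>S. \<forall>w\<in>J. 0 \<le> rate r S w" if "r \<in> {T<..c}" for r
    using that c by (intro b) auto
  show ?thesis
  proof (rule that[OF \<open>T < c\<close>])
    fix s S assume "s \<in> {T..c}" "S \<subseteq> J"
    show "0 \<le> p s S"
      by (rule kolmo_nonneg_on_interval[OF kolmo \<open>finite J\<close> _ _ c(2) p_T rate_c \<open>S \<subseteq> J\<close> \<open>s \<in> {T..c}\<close>])
        (use T c in auto)
  qed
qed

text \<open>The rates may be negative in general. Argue at the infimum of the times at which some
  \<open>p s S\<close> is negative.\<close>

lemma kolmo_nonneg:
  assumes kolmo: "kolmo J rate p" and "finite J"
    and rate: "\<And>T. T \<in> {0..<1} \<Longrightarrow> (\<And>s S. s \<in> {0..T} \<Longrightarrow> S \<subseteq> J \<Longrightarrow> 0 \<le> p s S) \<Longrightarrow>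
        eventually (\<lambda>s. \<forall>S. \<forall>w\<in>J. 0 \<le> rate s S w) (at_right T)"
    and "s \<in> {0..1}" "S \<subseteq> J"
  shows "0 \<le> p s S"
proof (rule ccontr)
  define B where "B = {s \<in> {0..1}. \<exists>S \<subseteq> J. p s S < 0}"
  assume "\<not> 0 \<le> p s S"
  then have "s \<in> B" using \<open>s \<in> {0..1}\<close> \<open>S \<subseteq> J\<close> unfolding B_def by auto
  have bdd: "bdd_below B" unfolding B_def by (rule bdd_belowI[of _ 0]) auto
  define T where "T = Inf B"
  have below_B: "T \<le> r" if "r \<in> B" for r
    unfolding T_def by (rule cInf_lower[OF that bdd])
  have "0 \<le> T" unfolding T_def
    by (rule cInf_greatest) (use \<open>s \<in> B\<close> in \<open>auto simp: B_def\<close>)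
  have before_T: "0 \<le> p r S'" if "r \<in> {0..<T}" "S' \<subseteq> J" for r S'
  proof (rule ccontr)
    assume "\<not> 0 \<le> p r S'"
    then have "r \<in> B" using that below_B[OF \<open>s \<in> B\<close>] \<open>s \<in> {0..1}\<close> unfolding B_def by auto
    then show False using below_B that by force
  qed
  have upto_T: "0 \<le> p r S'" if "r \<in> {0..T}" "S' \<subseteq> J" for r S'
  proof (cases "r < T")
    case False
    then have "r = T" using that by simp
    have "continuous_on {0..T} (\<lambda>r. p r S')"
      by (rule continuous_on_subset[OF kolmo_continuous_on[OF kolmo \<open>S' \<subseteq> J\<close>]])
        (use below_B[OF \<open>s \<in> B\<close>] \<open>s \<in> {0..1}\<close> in auto)
    then show ?thesis unfolding \<open>r = T\<close>
      using \<open>0 \<le> T\<close> before_T \<open>S' \<subseteq> J\<close> kolmo_initial[OF kolmo \<open>S' \<subseteq> J\<close>]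
      by (cases "T = 0") (auto intro: continuous_on_nonneg_endpoint)
  qed (use before_T that in auto)
  have "T \<noteq> s" using upto_T \<open>s \<in> {0..1}\<close> \<open>S \<subseteq> J\<close> \<open>\<not> 0 \<le> p s S\<close> below_B[OF \<open>s \<in> B\<close>] by force
  then have T: "T \<in> {0..<1}" using below_B[OF \<open>s \<in> B\<close>] \<open>0 \<le> T\<close> \<open>s \<in> {0..1}\<close> by auto
  obtain c where "T < c" and nonneg: "\<And>r S'. r \<in> {T..c} \<Longrightarrow> S' \<subseteq> J \<Longrightarrow> 0 \<le> p r S'"
    using kolmo_nonneg_continue[OF kolmo \<open>finite J\<close> T _ rate[OF T upto_T]] upto_T T by auto
  have "Inf B < c" using \<open>T < c\<close> unfolding T_def .
  then obtain \<beta> where "\<beta> \<in> B" "\<beta> < c"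
    using cInf_less_iff[OF _ bdd] \<open>s \<in> B\<close> by blast
  moreover obtain S' where "S' \<subseteq> J" "p \<beta> S' < 0" using \<open>\<beta> \<in> B\<close> unfolding B_def by blast
  ultimately show False using nonneg[of \<beta> S'] below_B by force
qed

lemma fbar_at_0: "kolmo J rate p \<Longrightarrow> finite J \<Longrightarrow> fbar J p w 0 = 1"
  unfolding fbar_def by (rule kolmo_sum_at_0) auto

lemma gprime_at_0: "kolmo J rate p \<Longrightarrow> finite J \<Longrightarrow> gprime J p u v 0 = 1"
  unfolding gprime_def by (rule kolmo_sum_at_0) auto

lemma sum_subsets_split_member:
  assumes "finite J"
  shows "(\<Sum>S | S \<subseteq> J \<and> P S. g S)
       = (\<Sum>S | S \<subseteq> J \<and> P S \<and> v \<notin> S. g S) + (\<Sum>S | S \<subseteq> J \<and> P S \<and> v \<in> S. g S)"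
proof -
  have fin: "finite {S. S \<subseteq> J \<and> Q S}" for Q using assms by (auto intro: finite_subset[of _ "Pow J"])
  have "{S. S \<subseteq> J \<and> P S} = {S. S \<subseteq> J \<and> P S \<and> v \<notin> S} \<union> {S. S \<subseteq> J \<and> P S \<and> v \<in> S}" by auto
  then show ?thesis by (simp only:) (rule sum.union_disjoint[OF fin fin], auto)
qed

lemma bool_set_cases: "{S :: bool set. S \<subseteq> UNIV} = {{}, {True}, {False}, UNIV}"
proof -
  have "S \<in> Pow {False, True}" for S :: "bool set" by (simp add: UNIV_bool[symmetric])
  then show ?thesis by (simp add: Pow_insert UNIV_bool image_iff) blast
qed

locale res_process =
  fixes t0 :: real and q :: "real \<Rightarrow> bool set \<Rightarrow> real"
  assumes kolmo_q: "kolmo UNIV (rateRES t0) q"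
begin

definition shared_rate :: "real \<Rightarrow> real"
  where "shared_rate s = 1 - ln 2 + (if t0 < s then ln 2 else 0)"

definition solo_rate :: "real \<Rightarrow> real"
  where "solo_rate s = 1 - ln 2 + (if t0 < s then 2 * ln 2 else 0)"

definition gbar :: "real \<Rightarrow> real"
  where "gbar s = 1 - q s UNIV"

text \<open>The paper's \<open>1 - f\<close>: the probability that the offline vertex \<open>a = True\<close> is unmatched.\<close>

definition fbar_ref :: "real \<Rightarrow> real"
  where "fbar_ref s = q s {} + q s {False}"

lemma rateRES_eq: "rateRES t0 s S w = (if (\<not> w) \<in> S then solo_rate s else shared_rate s)"
  by (simp add: rateRES_def solo_rate_def shared_rate_def)

lemma shared_rate_nonneg: "0 \<le> shared_rate s"
  and shared_rate_le_1: "shared_rate s \<le> 1"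
  and solo_rate_nonneg: "0 \<le> solo_rate s"
  using ln_2_less_1 ln_ge_zero[of 2] by (auto simp: shared_rate_def solo_rate_def)

lemma q_initial: "q 0 S = (if S = {} then 1 else 0)"
  using kolmo_initial[OF kolmo_q] by simp

lemma q_drift_has_integral:
  "t \<in> {0..1} \<Longrightarrow> ((\<lambda>s. kolmo_drift UNIV (rateRES t0) q s S) has_integral (q t S - q 0 S)) {0..t}"
  using kolmo_has_integral[OF kolmo_q] by simp

lemma q_empty_has_integral:
  assumes "t \<in> {0..1}"
  shows "((\<lambda>s. - 2 * shared_rate s * q s {}) has_integral (q t {} - 1)) {0..t}"
  using q_drift_has_integral[OF assms, where S="{}"] unfolding q_initial if_P[OF refl]
  by (rule has_integral_eq[rotated]) (simp add: kolmo_drift_def rateRES_eq UNIV_bool)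

lemma q_single_has_integral:
  assumes "t \<in> {0..1}"
  shows "((\<lambda>s. shared_rate s * q s {} - solo_rate s * q s {a}) has_integral q t {a}) {0..t}"
proof -
  have "UNIV - {a} = {\<not> a}" by auto
  then have "kolmo_drift UNIV (rateRES t0) q s {a} = shared_rate s * q s {} - solo_rate s * q s {a}" for s
    by (simp add: kolmo_drift_def rateRES_eq)
  then show ?thesis using q_drift_has_integral[OF assms, where S="{a}"] by (simp add: q_initial)
qed

lemma q_full_has_integral:
  assumes "t \<in> {0..1}"
  shows "((\<lambda>s. solo_rate s * (q s {True} + q s {False})) has_integral q t UNIV) {0..t}"
proof -
  have "kolmo_drift UNIV (rateRES t0) q s UNIV = solo_rate s * (q s {True} + q s {False})" for s
    by (simp add: kolmo_drift_def rateRES_eq UNIV_bool insert_Diff_if algebra_simps)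
  then show ?thesis using q_drift_has_integral[OF assms, where S=UNIV] by (simp add: q_initial)
qed

lemma q_nonneg:
  assumes "s \<in> {0..1}"
  shows "0 \<le> q s S"
proof (rule kolmo_nonneg[OF kolmo_q _ _ assms])
  show "\<forall>\<^sub>F s in at_right T. \<forall>S. \<forall>w\<in>UNIV. 0 \<le> rateRES t0 s S w" for T
    by (simp add: rateRES_eq solo_rate_nonneg shared_rate_nonneg)
qed simp_all

lemma q_total: "t \<in> {0..1} \<Longrightarrow> q t {} + q t {True} + q t {False} + q t UNIV = 1"
  using kolmo_total_mass[OF kolmo_q] unfolding bool_set_cases by (simp add: UNIV_bool insert_commute add_ac)

lemma q_singles_eq:
  assumes "s \<in> {0..1}"
  shows "q s {True} = q s {False}"
proof -
  have "0 \<le> q s {a} - q s {\<not> a}" for a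
  proof -
    have "((\<lambda>r. - solo_rate r * (q r {a} - q r {\<not> a})) has_integral (q r' {a} - q r' {\<not> a})) {0..r'}"
      if "r' \<in> {0..1}" for r'
      using has_integral_diff[OF q_single_has_integral[OF that, of a] q_single_has_integral[OF that, of "\<not> a"]]
      by (rule has_integral_eq[rotated]) (simp add: algebra_simps)
    then have "\<forall>r'\<in>{0..1}. ((\<lambda>r. - solo_rate r * (q r {a} - q r {\<not> a})) has_integral
        (q r' {a} - q r' {\<not> a} - (q 0 {a} - q 0 {\<not> a}))) {0..r'}"
      by (simp add: q_initial)
    then have "\<forall>r'\<in>{0..1}. 0 \<le> q r' {a} - q r' {\<not> a}"
      by (rule integral_form_nonneg[OF zero_le_one]) (auto simp: q_initial intro!: mult_nonneg_nonpos solo_rate_nonneg)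
    then show ?thesis using assms by blast
  qed
  from this[of True] this[of False] show ?thesis by simp
qed

lemma q_empty_ge_exp:
  assumes "s \<in> {0..1}"
  shows "exp (- 2 * s) \<le> q s {}"
proof -
  have exp_int: "((\<lambda>r. 2 * exp (- 2 * r)) has_integral (1 - exp (- 2 * t))) {0..t}" if "0 \<le> t" for t :: real
  proof -
    have "((\<lambda>r. - exp (- 2 * r)) has_real_derivative 2 * exp (- 2 * x)) (at x within {0..t})" for x
      by (auto intro!: derivative_eq_intros)
    then show ?thesis
      using fundamental_theorem_of_calculus[of 0 t "\<lambda>r. - exp (- 2 * r)" "\<lambda>r. 2 * exp (- 2 * r)"] that
      by (simp add: has_real_derivative_iff_has_vector_derivative)
  qed
  have "((\<lambda>r. - 2 * shared_rate r * q r {} + 2 * exp (- 2 * r)) has_integral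
      (q t {} - exp (- 2 * t) - (q 0 {} - exp (- 2 * 0)))) {0..t}" if "t \<in> {0..1}" for t
    using has_integral_add[OF q_empty_has_integral[OF that] exp_int] that by (simp add: q_initial)
  then have "\<forall>t\<in>{0..1}. 0 \<le> q t {} - exp (- 2 * t)"
  proof (intro integral_form_nonneg ballI)
    fix r assume r: "r \<in> {0<..1}" "q r {} - exp (- 2 * r) < 0"
    have "shared_rate r * q r {} \<le> q r {}"
      using q_nonneg[of r "{}"] r shared_rate_le_1 shared_rate_nonneg by (intro mult_left_le_one_le) auto
    then show "0 \<le> - 2 * shared_rate r * q r {} + 2 * exp (- 2 * r)" using r by simp
  qed (simp_all add: q_initial)
  then show ?thesis using assms by simp
qed

lemma gbar_eq: "s \<in> {0..1} \<Longrightarrow> gbar s = q s {} + 2 * q s {False}"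
  using q_total[of s] q_singles_eq[of s] unfolding gbar_def by linarith

lemma gbar_nonneg: "s \<in> {0..1} \<Longrightarrow> 0 \<le> gbar s"
  using q_nonneg by (simp add: gbar_eq)

lemma fbar_ref_pos: "s \<in> {0..1} \<Longrightarrow> 0 < fbar_ref s"
  using q_empty_ge_exp[of s] q_nonneg[of s "{False}"] exp_gt_zero[of "- 2 * s"]
  unfolding fbar_ref_def by linarith

lemma fbar_ref_at_0: "fbar_ref 0 = 1" and gbar_at_0: "gbar 0 = 1"
  by (simp_all add: fbar_ref_def gbar_def q_initial)

lemma fbar_ref_has_integral:
  assumes "t \<in> {0..1}"
  shows "((\<lambda>s. - (1 - ln 2) * fbar_ref s - (if t0 < s then ln 2 else 0) * gbar s)
           has_integral (fbar_ref t - 1)) {0..t}"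
proof -
  have "((\<lambda>s. - 2 * shared_rate s * q s {} + (shared_rate s * q s {} - solo_rate s * q s {False}))
      has_integral (q t {} - 1 + q t {False})) {0..t}"
    by (rule has_integral_add[OF q_empty_has_integral[OF assms] q_single_has_integral[OF assms]])
  moreover have "- 2 * shared_rate s * q s {} + (shared_rate s * q s {} - solo_rate s * q s {False})
      = - (1 - ln 2) * fbar_ref s - (if t0 < s then ln 2 else 0) * gbar s" if "s \<in> {0..t}" for s
  proof -
    have "gbar s = q s {} + 2 * q s {False}" using that assms by (intro gbar_eq) auto
    then show ?thesis by (simp add: fbar_ref_def shared_rate_def solo_rate_def algebra_simps)
  qed
  moreover have "q t {} - 1 + q t {False} = fbar_ref t - 1" by (simp add: fbar_ref_def)
  ultimately show ?thesis by (metis (no_types, lifting) has_integral_eq)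
qed

lemma gbar_has_integral:
  assumes "t \<in> {0..1}"
  shows "((\<lambda>s. - 2 * solo_rate s * (gbar s - fbar_ref s)) has_integral (gbar t - 1)) {0..t}"
proof -
  have "((\<lambda>s. - (solo_rate s * (q s {True} + q s {False}))) has_integral - q t UNIV) {0..t}"
    by (rule has_integral_neg[OF q_full_has_integral[OF assms]])
  moreover have "- (solo_rate s * (q s {True} + q s {False})) = - 2 * solo_rate s * (gbar s - fbar_ref s)"
    if "s \<in> {0..t}" for s
  proof -
    have "s \<in> {0..1}" using that assms by auto
    then have "gbar s - fbar_ref s = q s {True}"
      using gbar_eq q_singles_eq unfolding fbar_ref_def by simp
    then show ?thesis using q_singles_eq[OF \<open>s \<in> {0..1}\<close>] by simp
  qed
  moreover have "- q t UNIV = gbar t - 1" by (simp add: gbar_def)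
  ultimately show ?thesis by (metis (no_types, lifting) has_integral_eq)
qed

end

locale aux_process = res_process t0 q
  for t0 :: real and q :: "real \<Rightarrow> bool set \<Rightarrow> real" +
  fixes I :: "'i set" and J :: "'j set" and lam :: "'i \<Rightarrow> real"
    and nbr :: "'i \<Rightarrow> 'j set" and x :: "'i \<Rightarrow> 'j \<Rightarrow> real" and lab :: "'i \<Rightarrow> 'j \<Rightarrow> bool"
    and p :: "real \<Rightarrow> 'j set \<Rightarrow> real"
  assumes standing: "standing I J lam nbr x"
    and labeling: "valid_labeling I J nbr x lab"
    and kolmo_p: "kolmo J (aux_rate I J lam nbr lab t0 gbar p) p"
begin

abbreviation rate :: "real \<Rightarrow> 'j set \<Rightarrow> 'j \<Rightarrow> real"
  where "rate \<equiv> aux_rate I J lam nbr lab t0 gbar p"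

definition partner :: "'i \<Rightarrow> 'j \<Rightarrow> 'j"
  where "partner i w = the_elem (nbr i - {w})"

definition second_labeled :: "'j \<Rightarrow> 'i set"
  where "second_labeled w = {i \<in> I. w \<in> nbr i \<and> \<not> lab i w}"

definition denom :: "'j \<Rightarrow> 'j \<Rightarrow> real \<Rightarrow> real"
  where "denom w v s = 2 * fbar J p w s - gprime J p w v s"

definition scale :: "real \<Rightarrow> 'i \<Rightarrow> 'j \<Rightarrow> real"
  where "scale s i w = min (gbar s / denom w (partner i w) s) 1"

lemma finite_I: "finite I" and finite_J: "finite J"
  using standing unfolding standing_def by auto

lemma nbr_subset: "i \<in> I \<Longrightarrow> nbr i \<subseteq> J"
  using standing unfolding standing_def by blast

lemma lam_pos: "i \<in> I \<Longrightarrow> 0 < lam i"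
  using standing unfolding standing_def by blast

lemma neighbour_cases:
  assumes "i \<in> I" "w \<in> nbr i"
  obtains (first) "nbr i = {w}" "x i w = lam i"
    | (second) "nbr i = {w, partner i w}" "partner i w \<noteq> w" "x i w = lam i / 2"
proof -
  have "(\<exists>j. nbr i = {j} \<and> x i j = lam i) \<or>
      (\<exists>j1 j2. j1 \<noteq> j2 \<and> nbr i = {j1, j2} \<and> x i j1 = lam i / 2 \<and> x i j2 = lam i / 2)"
    using standing assms(1) unfolding standing_def by blast
  then show ?thesis
  proof (elim disjE exE conjE)
    fix j assume "nbr i = {j}" "x i j = lam i"
    with assms(2) show ?thesis by (intro first) auto
  next
    fix j1 j2 assume j: "j1 \<noteq> j2" "nbr i = {j1, j2}" "x i j1 = lam i / 2" "x i j2 = lam i / 2"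
    then obtain v where v: "nbr i = {w, v}" "v \<noteq> w" "x i w = lam i / 2"
      using assms(2) by (cases "w = j1") (auto simp: insert_commute)
    then have "partner i w = v" unfolding partner_def by (simp add: insert_Diff_if)
    with v show ?thesis by (intro second) auto
  qed
qed

lemma second_labeled_edge:
  assumes "i \<in> second_labeled w"
  shows "i \<in> I" "w \<in> nbr i" "\<not> lab i w" "nbr i = {w, partner i w}" "partner i w \<noteq> w"
    "partner i w \<in> J" "lam i = 2 * x i w" "0 < x i w"
proof -
  show i: "i \<in> I" "w \<in> nbr i" "\<not> lab i w" using assms unfolding second_labeled_def by auto
  have "card (nbr i) \<noteq> 1" using labeling i unfolding valid_labeling_def by blast
  have second: "nbr i = {w, partner i w} \<and> partner i w \<noteq> w \<and> x i w = lam i / 2"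
    by (rule neighbour_cases[OF i(1,2)]) (use \<open>card (nbr i) \<noteq> 1\<close> in auto)
  then show "nbr i = {w, partner i w}" "partner i w \<noteq> w" "lam i = 2 * x i w" by auto
  show "partner i w \<in> J" using second nbr_subset[OF i(1)] by auto
  show "0 < x i w" using second lam_pos[OF i(1)] by simp
qed

lemma sum_neighbours_split:
  "(\<Sum>i | i \<in> I \<and> w \<in> nbr i. g i)
     = (\<Sum>i | i \<in> I \<and> w \<in> nbr i \<and> lab i w. g i) + (\<Sum>i\<in>second_labeled w. g i)"
proof -
  have "{i. i \<in> I \<and> w \<in> nbr i} = {i. i \<in> I \<and> w \<in> nbr i \<and> lab i w} \<union> second_labeled w"
    unfolding second_labeled_def by auto
  moreover have "finite (second_labeled w)" using finite_I unfolding second_labeled_def by simp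
  ultimately show ?thesis
    using finite_I by (simp only:) (rule sum.union_disjoint, auto simp: second_labeled_def)
qed

lemma sum_x_second_labeled: "w \<in> J \<Longrightarrow> (\<Sum>i\<in>second_labeled w. x i w) = ln 2"
  using sum_neighbours_split[where w=w and g="\<lambda>i. x i w"] standing labeling
  unfolding standing_def valid_labeling_def by auto

lemma first_labeled_term:
  assumes "i \<in> I" "w \<in> nbr i" "lab i w"
  shows "lam i * aux_prob J nbr lab t0 gbar p s S i w = x i w"
proof (rule neighbour_cases[OF assms(1,2)])
  assume "nbr i = {w}" "x i w = lam i"
  then show ?thesis by (simp add: aux_prob_def)
next
  assume "nbr i = {w, partner i w}" "partner i w \<noteq> w" "x i w = lam i / 2"
  with assms(3) show ?thesis by (simp add: aux_prob_def)
qed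

lemma second_labeled_term:
  assumes "i \<in> second_labeled w"
  shows "lam i * aux_prob J nbr lab t0 gbar p s S i w
    = (if t0 < s then x i w * scale s i w * (if partner i w \<in> S then 2 else 1) else 0)"
proof -
  note edge = second_labeled_edge[OF assms]
  have "card (nbr i) = 2" using edge(4,5) by (simp only: card_2_iff) blast
  then have "aux_prob J nbr lab t0 gbar p s S i w
      = (if t0 < s then (if partner i w \<in> S then scale s i w else scale s i w / 2) else 0)"
    using edge(3) unfolding aux_prob_def scale_def denom_def partner_def by (simp add: Let_def)
  then show ?thesis using edge(7) by simp
qed

lemma aux_rate_eq:
  assumes "w \<in> J"
  shows "rate s S w = 1 - ln 2 + (if t0 < s then
    \<Sum>i\<in>second_labeled w. x i w * scale s i w * (if partner i w \<in> S then 2 else 1) else 0)"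
proof -
  have "(\<Sum>i | i \<in> I \<and> w \<in> nbr i \<and> lab i w. lam i * aux_prob J nbr lab t0 gbar p s S i w)
      = (\<Sum>i | i \<in> I \<and> w \<in> nbr i \<and> lab i w. x i w)"
    by (rule sum.cong) (auto simp: first_labeled_term)
  also have "\<dots> = 1 - ln 2" using labeling assms unfolding valid_labeling_def by auto
  finally have first: "(\<Sum>i | i \<in> I \<and> w \<in> nbr i \<and> lab i w. lam i * aux_prob J nbr lab t0 gbar p s S i w)
      = 1 - ln 2" .
  have second: "(\<Sum>i\<in>second_labeled w. lam i * aux_prob J nbr lab t0 gbar p s S i w)
      = (if t0 < s then \<Sum>i\<in>second_labeled w. x i w * scale s i w * (if partner i w \<in> S then 2 else 1)
         else 0)"
    by (cases "t0 < s") (simp_all add: second_labeled_term cong: sum.cong)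
  show ?thesis unfolding aux_rate_def sum_neighbours_split[where w=w] first second ..
qed

lemma aux_rate_le_solo_rate:
  assumes "w \<in> J"
  shows "rate s S w \<le> solo_rate s"
proof -
  have "x i w * scale s i w * (if partner i w \<in> S then 2 else 1) \<le> x i w * 2"
    if "i \<in> second_labeled w" for i
  proof -
    have "scale s i w * (if partner i w \<in> S then 2 else 1) \<le> 2"
      using min.cobounded2[of "gbar s / denom w (partner i w) s" 1] unfolding scale_def
      by (cases "partner i w \<in> S") auto
    moreover have "0 \<le> x i w" using second_labeled_edge(8)[OF that] by simp
    ultimately show ?thesis by (simp add: mult.assoc mult_left_mono)
  qed
  then have "(\<Sum>i\<in>second_labeled w. x i w * scale s i w * (if partner i w \<in> S then 2 else 1))
      \<le> (\<Sum>i\<in>second_labeled w. x i w * 2)"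
    by (rule sum_mono)
  also have "\<dots> = 2 * ln 2"
    using sum_x_second_labeled[OF assms] by (simp add: sum_distrib_right[symmetric])
  finally show ?thesis using assms by (simp add: aux_rate_eq solo_rate_def)
qed

lemma aux_rate_nonneg:
  assumes "w \<in> J" "0 \<le> gbar s" "\<forall>v\<in>J. 0 \<le> denom w v s"
  shows "0 \<le> rate s S w"
proof -
  have "0 \<le> x i w * scale s i w * (if partner i w \<in> S then 2 else 1)" if "i \<in> second_labeled w" for i
  proof -
    have "0 \<le> denom w (partner i w) s" using assms(3) second_labeled_edge(6)[OF that] by blast
    then have "0 \<le> scale s i w" unfolding scale_def using assms(2) by simp
    then show ?thesis using second_labeled_edge(8)[OF that] by simp
  qed
  then have "0 \<le> (\<Sum>i\<in>second_labeled w. x i w * scale s i w * (if partner i w \<in> S then 2 else 1))"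
    by (rule sum_nonneg)
  then show ?thesis using assms(1) ln_2_less_1 by (simp add: aux_rate_eq)
qed

lemma fbar_minus_gprime: "fbar J p w s - gprime J p w v s = (\<Sum>S | S \<subseteq> J \<and> w \<notin> S \<and> v \<in> S. p s S)"
  using sum_subsets_split_member[OF finite_J, where P="\<lambda>S. w \<notin> S" and v=v and g="p s"]
  unfolding fbar_def gprime_def by simp

lemma weighted_sum_eq_denom:
  "(\<Sum>S | S \<subseteq> J \<and> w \<notin> S. p s S * (if v \<in> S then 2 else 1)) = denom w v s"
proof -
  have "(\<Sum>S | S \<subseteq> J \<and> w \<notin> S \<and> v \<notin> S. p s S * (if v \<in> S then 2 else 1)) = gprime J p w v s"
    unfolding gprime_def by (rule sum.cong) auto
  moreover have "(\<Sum>S | S \<subseteq> J \<and> w \<notin> S \<and> v \<in> S. p s S * (if v \<in> S then 2 else 1))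
      = 2 * (fbar J p w s - gprime J p w v s)"
    unfolding fbar_minus_gprime sum_distrib_left by (rule sum.cong) auto
  ultimately show ?thesis
    unfolding sum_subsets_split_member[OF finite_J, where P="\<lambda>S. w \<notin> S" and v=v] denom_def by simp
qed

lemma flux_eq:
  assumes "w \<in> J"
  shows "(\<Sum>S | S \<subseteq> J \<and> w \<notin> S. p s S * rate s S w)
    = (1 - ln 2) * fbar J p w s
      + (if t0 < s then \<Sum>i\<in>second_labeled w. x i w * scale s i w * denom w (partner i w) s else 0)"
proof (cases "t0 < s")
  case True
  let ?F = "{S. S \<subseteq> J \<and> w \<notin> S}"
  let ?c = "\<lambda>i S. p s S * (if partner i w \<in> S then 2 else 1)"
  have "(\<Sum>S\<in>?F. p s S * rate s S w)
      = (\<Sum>S\<in>?F. (1 - ln 2) * p s S + (\<Sum>i\<in>second_labeled w. x i w * scale s i w * ?c i S))"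
    by (rule sum.cong) (simp_all add: aux_rate_eq[OF assms] True distrib_left sum_distrib_left mult_ac)
  also have "\<dots> = (1 - ln 2) * fbar J p w s + (\<Sum>i\<in>second_labeled w. \<Sum>S\<in>?F. x i w * scale s i w * ?c i S)"
    by (simp add: sum.distrib fbar_def sum_distrib_left) (rule sum.swap)
  also have "\<dots> = (1 - ln 2) * fbar J p w s
      + (\<Sum>i\<in>second_labeled w. x i w * scale s i w * denom w (partner i w) s)"
    by (simp add: sum_distrib_left[symmetric] weighted_sum_eq_denom)
  finally show ?thesis using True by simp
next
  case False
  then show ?thesis using assms by (simp add: aux_rate_eq fbar_def sum_distrib_left mult.commute)
qed

definition excess_drift :: "'j \<Rightarrow> real \<Rightarrow> real"
  where "excess_drift w s = - (1 - ln 2) * (fbar J p w s - fbar_ref s)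
    + (if t0 < s then \<Sum>i\<in>second_labeled w. x i w * (gbar s - scale s i w * denom w (partner i w) s)
       else 0)"

lemma excess_has_integral:
  assumes "w \<in> J" "t \<in> {0..1}"
  shows "(excess_drift w has_integral (fbar J p w t - fbar_ref t)) {0..t}"
proof -
  have "excess_drift w = (\<lambda>s. - (\<Sum>S | S \<subseteq> J \<and> w \<notin> S. p s S * rate s S w)
      - (- (1 - ln 2) * fbar_ref s - (if t0 < s then ln 2 else 0) * gbar s))"
  proof
    fix s
    have "(\<Sum>i\<in>second_labeled w. x i w * (gbar s - scale s i w * denom w (partner i w) s))
        = ln 2 * gbar s - (\<Sum>i\<in>second_labeled w. x i w * scale s i w * denom w (partner i w) s)"
      using sum_x_second_labeled[OF assms(1)]
      by (simp add: right_diff_distrib sum_subtractf sum_distrib_right[symmetric] mult.assoc)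
    then show "excess_drift w s = - (\<Sum>S | S \<subseteq> J \<and> w \<notin> S. p s S * rate s S w)
        - (- (1 - ln 2) * fbar_ref s - (if t0 < s then ln 2 else 0) * gbar s)"
      unfolding excess_drift_def flux_eq[OF assms(1)] by (simp add: algebra_simps)
  qed
  then show ?thesis
    using has_integral_diff[OF kolmo_fbar_has_integral[OF kolmo_p finite_J assms] fbar_ref_has_integral[OF assms(2)]]
    by simp
qed

lemma fbar_ref_le_fbar:
  assumes "w \<in> J" "s \<in> {0..1}"
  shows "fbar_ref s \<le> fbar J p w s"
proof -
  have "\<forall>t\<in>{0..1}. (excess_drift w has_integral
      (fbar J p w t - fbar_ref t - (fbar J p w 0 - fbar_ref 0))) {0..t}"
    using excess_has_integral[OF assms(1)] fbar_at_0[OF kolmo_p finite_J] fbar_ref_at_0 by simp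
  then have "\<forall>t\<in>{0..1}. 0 \<le> fbar J p w t - fbar_ref t"
  proof (rule integral_form_nonneg[OF zero_le_one])
    fix r assume r: "r \<in> {0<..1}" and "fbar J p w r - fbar_ref r < 0"
    then have "0 \<le> - (1 - ln 2) * (fbar J p w r - fbar_ref r)"
      using ln_2_less_1 by (simp add: mult_nonpos_nonpos)
    moreover have "0 \<le> x i w * (gbar r - scale r i w * denom w (partner i w) r)"
      if "i \<in> second_labeled w" for i
      using second_labeled_edge(8)[OF that] min_divide_1_mult_le[OF gbar_nonneg] r
      unfolding scale_def by simp
    ultimately show "0 \<le> excess_drift w r"
      unfolding excess_drift_def by (simp add: sum_nonneg)
  qed (simp add: fbar_at_0[OF kolmo_p finite_J] fbar_ref_at_0)
  with assms(2) show ?thesis by simp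
qed

lemma denom_pos:
  assumes "s \<in> {0..1}" "w \<in> J" and p_s: "\<And>S. S \<subseteq> J \<Longrightarrow> 0 \<le> p s S"
  shows "0 < denom w v s"
proof -
  have "0 \<le> fbar J p w s - gprime J p w v s"
    unfolding fbar_minus_gprime using p_s by (intro sum_nonneg) auto
  moreover have "0 < fbar J p w s"
    using fbar_ref_pos[OF assms(1)] fbar_ref_le_fbar[OF assms(2,1)] by simp
  ultimately show ?thesis unfolding denom_def by simp
qed

lemma denom_continuous_on: "continuous_on {0..1} (denom w v)"
proof -
  have "continuous_on {0..1}
      (\<lambda>s. 2 * (\<Sum>S | S \<subseteq> J \<and> w \<notin> S. p s S) - (\<Sum>S | S \<subseteq> J \<and> w \<notin> S \<and> v \<notin> S. p s S))"
    using kolmo_continuous_on[OF kolmo_p] by (intro continuous_intros continuous_on_sum) auto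
  then show ?thesis unfolding denom_def fbar_def gprime_def by (simp add: fun_eq_iff)
qed

text \<open>The rates of AUX can only be negative where some \<open>denom\<close> is; just after a time up
  to which \<open>p\<close> is nonnegative, all \<open>denom\<close> are still positive by continuity.\<close>

lemma p_nonneg:
  assumes "s \<in> {0..1}" "S \<subseteq> J"
  shows "0 \<le> p s S"
proof (rule kolmo_nonneg[OF kolmo_p finite_J _ assms])
  fix T assume T: "T \<in> {0..<1}" and p_T: "\<And>s S. s \<in> {0..T} \<Longrightarrow> S \<subseteq> J \<Longrightarrow> 0 \<le> p s S"
  have "\<forall>w\<in>J. \<forall>v\<in>J. eventually (\<lambda>s. 0 < denom w v s) (at_right T)"
  proof (intro ballI)
    fix w v assume "w \<in> J" "v \<in> J"
    have "continuous_on {T..1} (denom w v)"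
      by (rule continuous_on_subset[OF denom_continuous_on]) (use T in auto)
    then have "(denom w v \<longlongrightarrow> denom w v T) (at_right T)"
      using T by (intro continuous_on_Icc_at_rightD) auto
    moreover have "0 < denom w v T" using T p_T \<open>w \<in> J\<close> by (intro denom_pos) auto
    ultimately show "eventually (\<lambda>s. 0 < denom w v s) (at_right T)"
      by (rule order_tendstoD(1))
  qed
  then have "eventually (\<lambda>s. \<forall>w\<in>J. \<forall>v\<in>J. 0 < denom w v s) (at_right T)"
    using finite_J by (simp add: eventually_ball_finite_distrib)
  moreover have "eventually (\<lambda>s. s \<in> {0..1}) (at_right T)"
    unfolding eventually_at_right_field using T by (intro exI[of _ 1]) auto
  ultimately show "eventually (\<lambda>s. \<forall>S. \<forall>w\<in>J. 0 \<le> rate s S w) (at_right T)"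
  proof eventually_elim
    case (elim s)
    then have "\<forall>v\<in>J. 0 \<le> denom w v s" if "w \<in> J" for w
      using that by (simp add: less_imp_le)
    then show ?case using elim by (auto intro!: aux_rate_nonneg gbar_nonneg)
  qed
qed

lemma denom_nonneg: "s \<in> {0..1} \<Longrightarrow> w \<in> J \<Longrightarrow> 0 \<le> denom w v s"
  using denom_pos[of s w v] p_nonneg by (simp add: less_imp_le)

lemma gprime_commute: "gprime J p u v s = gprime J p v u s"
  unfolding gprime_def by (rule sum.cong) auto

definition pair_drift :: "'j \<Rightarrow> 'j \<Rightarrow> real \<Rightarrow> real"
  where "pair_drift u v s = 2 * solo_rate s * (gbar s - fbar_ref s)
    - (\<Sum>S | S \<subseteq> J \<and> u \<notin> S \<and> v \<in> S. p s S * rate s S u)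
    - (\<Sum>S | S \<subseteq> J \<and> v \<notin> S \<and> u \<in> S. p s S * rate s S v)"

lemma pair_has_integral:
  assumes "u \<in> J" "v \<in> J" "u \<noteq> v" "t \<in> {0..1}"
  shows "(pair_drift u v has_integral
    (fbar J p u t + fbar J p v t - gprime J p u v t - gbar t)) {0..t}"
proof -
  let ?flux = "\<lambda>a b s. \<Sum>S | S \<subseteq> J \<and> a \<notin> S \<and> b \<in> S. p s S * rate s S a"
  let ?both = "\<lambda>s. \<Sum>S | S \<subseteq> J \<and> u \<notin> S \<and> v \<notin> S. p s S * (rate s S u + rate s S v)"
  have split: "(\<Sum>S | S \<subseteq> J \<and> a \<notin> S. p s S * rate s S a)
      = (\<Sum>S | S \<subseteq> J \<and> a \<notin> S \<and> b \<notin> S. p s S * rate s S a) + ?flux a b s" for a b s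
    by (rule sum_subsets_split_member[OF finite_J])
  have "{S. S \<subseteq> J \<and> v \<notin> S \<and> u \<notin> S} = {S. S \<subseteq> J \<and> u \<notin> S \<and> v \<notin> S}" by auto
  then have "pair_drift u v = (\<lambda>s. - (\<Sum>S | S \<subseteq> J \<and> u \<notin> S. p s S * rate s S u)
      - (\<Sum>S | S \<subseteq> J \<and> v \<notin> S. p s S * rate s S v) + ?both s
      - (- 2 * solo_rate s * (gbar s - fbar_ref s)))"
    unfolding pair_drift_def split[where a=u and b=v] split[where a=v and b=u]
    by (simp add: fun_eq_iff distrib_left sum.distrib)
  then show ?thesis
    using has_integral_diff[OF has_integral_diff[OF has_integral_add[OF
        kolmo_fbar_has_integral[OF kolmo_p finite_J assms(1,4)]
        kolmo_fbar_has_integral[OF kolmo_p finite_J assms(2,4)]]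
        kolmo_gprime_has_integral[OF kolmo_p finite_J assms]]
        gbar_has_integral[OF assms(4)]]
    by (simp add: algebra_simps)
qed

lemma flux_partner_matched_le:
  assumes "s \<in> {0..1}" "u \<in> J"
  shows "(\<Sum>S | S \<subseteq> J \<and> u \<notin> S \<and> v \<in> S. p s S * rate s S u)
    \<le> solo_rate s * (fbar J p u s - gprime J p u v s)"
proof -
  have "(\<Sum>S | S \<subseteq> J \<and> u \<notin> S \<and> v \<in> S. p s S * rate s S u)
      \<le> (\<Sum>S | S \<subseteq> J \<and> u \<notin> S \<and> v \<in> S. p s S * solo_rate s)"
    using p_nonneg[OF assms(1)] aux_rate_le_solo_rate[OF assms(2)]
    by (intro sum_mono mult_left_mono) auto
  then show ?thesis unfolding fbar_minus_gprime sum_distrib_left by (simp add: mult.commute)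
qed

lemma pair_drift_nonneg:
  assumes "u \<in> J" "v \<in> J" "s \<in> {0..1}"
    and "fbar J p u s + fbar J p v s - gprime J p u v s \<le> gbar s"
  shows "0 \<le> pair_drift u v s"
proof -
  have "(fbar J p u s - gprime J p u v s) + (fbar J p v s - gprime J p v u s) \<le> 2 * (gbar s - fbar_ref s)"
    using assms(4) fbar_ref_le_fbar[OF assms(1,3)] fbar_ref_le_fbar[OF assms(2,3)]
    by (simp add: gprime_commute[of v u])
  then have "solo_rate s * ((fbar J p u s - gprime J p u v s) + (fbar J p v s - gprime J p v u s))
      \<le> solo_rate s * (2 * (gbar s - fbar_ref s))"
    by (rule mult_left_mono[OF _ solo_rate_nonneg])
  then show ?thesis
    using flux_partner_matched_le[OF assms(3,1), of v] flux_partner_matched_le[OF assms(3,2), of u]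
    unfolding pair_drift_def by (simp add: algebra_simps)
qed

lemma gbar_le_pair:
  assumes "u \<in> J" "v \<in> J" "u \<noteq> v" "s \<in> {0..1}"
  shows "gbar s \<le> fbar J p u s + fbar J p v s - gprime J p u v s"
proof -
  have "\<forall>t\<in>{0..1}. (pair_drift u v has_integral
      ((fbar J p u t + fbar J p v t - gprime J p u v t - gbar t)
       - (fbar J p u 0 + fbar J p v 0 - gprime J p u v 0 - gbar 0))) {0..t}"
    using pair_has_integral[OF assms(1-3)]
    by (simp add: fbar_at_0[OF kolmo_p finite_J] gprime_at_0[OF kolmo_p finite_J] gbar_at_0)
  then have "\<forall>t\<in>{0..1}. 0 \<le> fbar J p u t + fbar J p v t - gprime J p u v t - gbar t"
    by (rule integral_form_nonneg[OF zero_le_one])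
      (auto simp: fbar_at_0[OF kolmo_p finite_J] gprime_at_0[OF kolmo_p finite_J] gbar_at_0
        intro!: pair_drift_nonneg assms(1,2))
  with assms(4) show ?thesis by simp
qed

lemma excess_drift_le:
  assumes "w \<in> J" "s \<in> {0..1}" and M: "\<forall>v\<in>J. fbar J p v s - fbar_ref s \<le> M"
  shows "excess_drift w s \<le> ln 2 * M"
proof -
  have "0 \<le> M" using M assms(1) fbar_ref_le_fbar[OF assms(1,2)] by force
  have "gbar s - scale s i w * denom w (partner i w) s \<le> M" if "i \<in> second_labeled w" for i
  proof -
    let ?v = "partner i w"
    note edge = second_labeled_edge[OF that]
    have "scale s i w * denom w ?v s = min (gbar s) (denom w ?v s)"
      unfolding scale_def by (rule min_divide_1_mult_eq[OF gbar_nonneg[OF assms(2)] denom_nonneg[OF assms(2,1)]])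
    moreover have "gbar s - denom w ?v s \<le> M"
      using gbar_le_pair[OF assms(1) edge(6) edge(5)[symmetric] assms(2)] M edge(6)
        fbar_ref_le_fbar[OF assms(1,2)]
      unfolding denom_def by force
    ultimately show ?thesis using \<open>0 \<le> M\<close> by (simp add: min_def)
  qed
  then have "(\<Sum>i\<in>second_labeled w. x i w * (gbar s - scale s i w * denom w (partner i w) s))
      \<le> (\<Sum>i\<in>second_labeled w. x i w * M)"
    using second_labeled_edge(8) by (intro sum_mono mult_left_mono) (auto simp: less_imp_le)
  also have "\<dots> = ln 2 * M"
    using sum_x_second_labeled[OF assms(1)] by (simp add: sum_distrib_right[symmetric])
  finally have "(\<Sum>i\<in>second_labeled w. x i w * (gbar s - scale s i w * denom w (partner i w) s))
      \<le> ln 2 * M" .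
  moreover have "- (1 - ln 2) * (fbar J p w s - fbar_ref s) \<le> 0"
    using fbar_ref_le_fbar[OF assms(1,2)] ln_2_less_1 by (intro mult_nonpos_nonneg) auto
  moreover have "0 \<le> ln 2 * M" using \<open>0 \<le> M\<close> by simp
  ultimately show ?thesis unfolding excess_drift_def by auto
qed

text \<open>Gronwall with \<open>K = ln 2 < 1\<close> on \<open>[0, 1]\<close>.\<close>

lemma fbar_eq_fbar_ref:
  assumes "w \<in> J" "s \<in> {0..1}"
  shows "fbar J p w s = fbar_ref s"
proof -
  have "fbar J p w s - fbar_ref s = 0"
  proof (rule integral_form_family_eq_0[OF finite_J zero_le_one _ _ _ _ _ _ assms,
        where K="ln 2" and G=excess_drift])
    show "0 \<le> ln (2::real)" by simp
    show "ln 2 * (1 - 0) < (1::real)" using ln_2_less_1 by simp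
  next
    fix v and r :: real assume "v \<in> J" "r \<in> {0..1}"
    then show "(excess_drift v has_integral
        (fbar J p v r - fbar_ref r - (fbar J p v 0 - fbar_ref 0))) {0..r}"
      using excess_has_integral by (simp add: fbar_at_0[OF kolmo_p finite_J] fbar_ref_at_0)
    show "0 \<le> fbar J p v r - fbar_ref r" using fbar_ref_le_fbar \<open>v \<in> J\<close> \<open>r \<in> {0..1}\<close> by simp
  next
    fix v M and r :: real assume "v \<in> J" "r \<in> {0..1}" "\<forall>v'\<in>J. fbar J p v' r - fbar_ref r \<le> M"
    then show "excess_drift v r \<le> ln 2 * M" by (rule excess_drift_le)
  qed (simp add: fbar_at_0[OF kolmo_p finite_J] fbar_ref_at_0)
  then show ?thesis by simp
qed

lemma gbar_le_denom:
  assumes "u \<in> J" "v \<in> J" "u \<noteq> v" "t \<in> {0..1}"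
  shows "gbar t \<le> denom u v t"
  using gbar_le_pair[OF assms] fbar_eq_fbar_ref[OF assms(1,4)] fbar_eq_fbar_ref[OF assms(2,4)]
  unfolding denom_def by simp

end

theorem lemma4p6:
  fixes I :: "'i set" and J :: "'j set" and lam :: "'i \<Rightarrow> real"
    and nbr :: "'i \<Rightarrow> 'j set" and x :: "'i \<Rightarrow> 'j \<Rightarrow> real" and lab :: "'i \<Rightarrow> 'j \<Rightarrow> bool"
    and t0 t :: real and q :: "real \<Rightarrow> bool set \<Rightarrow> real" and p :: "real \<Rightarrow> 'j set \<Rightarrow> real"
    and i :: 'i and u v :: 'j
  assumes "standing I J lam nbr x"
    and "valid_labeling I J nbr x lab"
    and "0 \<le> t0" and "t0 \<le> 1"
    and "kolmo (UNIV :: bool set) (rateRES t0) q"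
    and "kolmo J (aux_rate I J lam nbr lab t0 (\<lambda>s. 1 - q s UNIV) p) p"
    and "i \<in> I" and "nbr i = {u, v}" and "u \<noteq> v"
    and "t \<in> {0..1}"
  shows "2 * fbar J p u t - gprime J p u v t \<ge> 1 - q t UNIV"
proof -
  interpret res_process t0 q by unfold_locales (fact assms(5))
  have "(\<lambda>s. 1 - q s UNIV) = gbar" by (simp add: fun_eq_iff gbar_def)
  then interpret aux_process t0 q I J lam nbr x lab p
    using assms(1,2,6) by unfold_locales simp_all
  have "u \<in> J" "v \<in> J" using nbr_subset[OF assms(7)] assms(8) by auto
  then show ?thesis
    using gbar_le_denom[OF _ _ assms(9,10)] unfolding denom_def gbar_def by simp
qed

end
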